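(* Let $R$ be a finite commutative ring with identity, and let $f=\frac{1}{1-X}=\sum_{k\ge 0}X^k\in R[[X]]$. Then the $\omega$-sequential function $\mu[f]:R[[X]]\to R[[X]],\ g\mapsto fg$ is finite state, and its set of remainders is $Q_{\mu[f]}=\{\,g\mapsto f\cdot(s+g)\ \mid\ s\in R\,\}$.
   Context: Identify $R^\omega$ (infinite words over the alphabet $R$) with $R[[X]]$ via $(a_0,a_1,\dots)\mapsto\sum_k a_kX^k$. For infinite words $x$, $x[0,n]$ denotes its prefix of length $n$. A map $\zeta:A^\omega\to B^\omega$ is $\omega$-sequential if whenever a finite word $u$ is a common prefix of $x$ and $y$, then $\zeta(x)[0,|u|]=\zeta(y)[0,|u|]$. For such $\zeta$ and a finite word $u$, write $\zeta(ux)=\epsilon(u)\zeta_u(x)$ for all $x\in A^\omega$, where $\epsilon(u)=\zeta(ux)[0,|u|]$ (independent of $x$) and $\zeta_u:A^\omega\to B^\omega$; $\zeta_u$ is the remainder of $\zeta$ for $u$. The set of remainders is $Q_\zeta=\{\zeta_u\mid u\in A^*\}$, and $\zeta$ is called finite state if $Q_\zeta$ is finite. *)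

theory Defs
  imports "HOL-Computational_Algebra.Formal_Power_Series"
begin

text \<open>Infinite words over R are identified with formal power series R[[X]]
  via (a_0,a_1,...) corresponds to sum a_k X^k, i.e. the k-th letter is the k-th coefficient.
  Finite words are lists.\<close>

definition prefix_of :: "'a fps \<Rightarrow> nat \<Rightarrow> 'a list" where
  "prefix_of x n = map (fps_nth x) [0..<n]"

definition conc :: "'a list \<Rightarrow> 'a fps \<Rightarrow> 'a fps" where
  "conc u x = Abs_fps (\<lambda>n. if n < length u then u ! n else fps_nth x (n - length u))"

definition omega_sequential :: "('a fps \<Rightarrow> 'b fps) \<Rightarrow> bool" where
  "omega_sequential \<zeta> \<longleftrightarrow>
     (\<forall>u x y. prefix_of (\<zeta> (conc u x)) (length u) = prefix_of (\<zeta> (conc u y)) (length u))"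

text \<open>The remainder zeta_u: zeta(u x) = eps(u) zeta_u(x), so zeta_u(x) is zeta(u x) with its
  first |u| letters removed.\<close>
definition remainder :: "('a fps \<Rightarrow> 'b fps) \<Rightarrow> 'a list \<Rightarrow> 'a fps \<Rightarrow> 'b fps" where
  "remainder \<zeta> u = (\<lambda>x. Abs_fps (\<lambda>n. fps_nth (\<zeta> (conc u x)) (n + length u)))"

definition remainders :: "('a fps \<Rightarrow> 'b fps) \<Rightarrow> ('a fps \<Rightarrow> 'b fps) set" where
  "remainders \<zeta> = {remainder \<zeta> u | u. True}"

definition finite_state :: "('a fps \<Rightarrow> 'b fps) \<Rightarrow> bool" where
  "finite_state \<zeta> \<longleftrightarrow> finite (remainders \<zeta>)"

end

theory Submission
  imports Defs
begin

text \<open>Multiplication by a power series is causal: the n-th coefficient of f g only depends on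
  the first n+1 coefficients of g, so it is omega-sequential. For f = 1/(1-X) the n-th
  coefficient of f g is the partial sum g_0 + ... + g_n. Hence after reading a finite word u
  the remainder only remembers the sum s of the letters of u and equals g \<mapsto> f (s + g);
  as s ranges over the finite ring R, there are finitely many remainders.\<close>

unbundle fps_syntax

lemma conc_nth: "conc u x $ k = (if k < length u then u ! k else x $ (k - length u))"
  by (simp add: conc_def)

lemma omega_sequential_if_causal:
  assumes "\<And>x y n. (\<And>k. k \<le> n \<Longrightarrow> x $ k = y $ k) \<Longrightarrow> \<zeta> x $ n = \<zeta> y $ n"
  shows "omega_sequential \<zeta>"
  unfolding omega_sequential_def prefix_of_def
proof (intro allI)
  fix u and x y :: "'a fps"
  have "\<zeta> (conc u x) $ n = \<zeta> (conc u y) $ n" if "n < length u" for n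
    using that by (intro assms) (simp add: conc_nth)
  then show "map (($) (\<zeta> (conc u x))) [0..<length u] = map (($) (\<zeta> (conc u y))) [0..<length u]"
    by simp
qed

lemma omega_sequential_fps_mult:
  fixes f :: "'a::comm_ring_1 fps"
  shows "omega_sequential (\<lambda>g. f * g)"
  by (rule omega_sequential_if_causal) (simp add: fps_mult_nth)

lemma fps_nth_ones_mult:
  fixes g :: "'a::comm_ring_1 fps"
  shows "(Abs_fps (\<lambda>k. 1) * g) $ n = (\<Sum>k\<le>n. g $ k)"
proof -
  have "(Abs_fps (\<lambda>k. 1) * g) $ n = (\<Sum>i\<in>{0..n}. g $ (n - i))"
    by (simp add: fps_mult_nth)
  also have "\<dots> = (\<Sum>k\<le>n. g $ k)"
    by (rule sum.reindex_bij_witness[of _ "\<lambda>i. n - i" "\<lambda>i. n - i"]) auto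
  finally show ?thesis .
qed

lemma sum_atMost_conc:
  "(\<Sum>k\<le>n + length u. conc u x $ k) = sum_list u + (\<Sum>j\<le>n. x $ j)"
proof -
  let ?m = "length u"
  have split: "{..n + ?m} = {..<?m} \<union> {?m..n + ?m}" by auto
  have "(\<Sum>k\<le>n + ?m. conc u x $ k)
      = (\<Sum>k<?m. conc u x $ k) + (\<Sum>k\<in>{?m..n + ?m}. conc u x $ k)"
    unfolding split by (rule sum.union_disjoint) auto
  also have "(\<Sum>k<?m. conc u x $ k) = (\<Sum>k<?m. u ! k)"
    by (rule sum.cong) (auto simp: conc_nth)
  also have "\<dots> = sum_list u"
    by (simp add: sum_list_sum_nth atLeast0LessThan)
  also have "(\<Sum>k\<in>{?m..n + ?m}. conc u x $ k) = (\<Sum>j\<in>{0..n}. conc u x $ (j + ?m))"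
    using sum.shift_bounds_cl_nat_ivl[of "($) (conc u x)" 0 ?m n] by simp
  also have "\<dots> = (\<Sum>j\<le>n. x $ j)"
    by (simp add: conc_nth atLeast0AtMost)
  finally show ?thesis .
qed

lemma remainder_ones_mult:
  fixes f :: "'a::comm_ring_1 fps"
  assumes "f = Abs_fps (\<lambda>k. 1)"
  shows "remainder (\<lambda>g. f * g) u = (\<lambda>g. f * (fps_const (sum_list u) + g))"
proof (intro ext fps_ext)
  fix x n
  have "(\<Sum>k\<le>n. (fps_const (sum_list u) + x) $ k) = sum_list u + (\<Sum>k\<le>n. x $ k)"
    by (simp add: sum.distrib fps_nth_fps_const)
  then show "remainder (\<lambda>g. f * g) u x $ n = (f * (fps_const (sum_list u) + x)) $ n"
    by (simp add: remainder_def assms fps_nth_ones_mult sum_atMost_conc)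
qed

lemma remainders_ones_mult:
  fixes f :: "'a::comm_ring_1 fps"
  assumes "f = Abs_fps (\<lambda>k. 1)"
  shows "remainders (\<lambda>g. f * g) = range (\<lambda>s. \<lambda>g. f * (fps_const s + g))"
proof -
  have "remainders (\<lambda>g. f * g) = (\<lambda>s. \<lambda>g. f * (fps_const s + g)) ` range sum_list"
    unfolding remainders_def remainder_ones_mult[OF assms] by auto
  also have "range sum_list = (UNIV :: 'a set)"
    by (metis sum_list_simps surj_def add_0_right)
  finally show ?thesis .
qed

theorem theorem7p14:
  fixes f :: "'r::{comm_ring_1, finite} fps"
  assumes f_def: "f = Abs_fps (\<lambda>k. 1)"
  shows "omega_sequential (\<lambda>g. f * g)
       \<and> finite_state (\<lambda>g. f * g)
       \<and> remainders (\<lambda>g. f * g) = {(\<lambda>g. f * (fps_const s + g)) | s. True}"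
proof -
  have remainders: "remainders (\<lambda>g. f * g) = range (\<lambda>s. \<lambda>g. f * (fps_const s + g))"
    using f_def by (rule remainders_ones_mult)
  then have "finite_state (\<lambda>g. f * g)"
    by (simp add: finite_state_def)
  moreover have "range (\<lambda>s. \<lambda>g. f * (fps_const s + g)) = {(\<lambda>g. f * (fps_const s + g)) | s. True}"
    by auto
  ultimately show ?thesis
    using omega_sequential_fps_mult remainders by simp
qed

end
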